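(* Let $G=\langle S_k\mid K\rangle$ be a finitely generated semigroup as described in the context, let $\mathcal{A}$ be a finite alphabet and let $X\subseteq\mathcal{A}^G$ be a tree shift. If $K$ is primitive, then for all $1\le i,j\le k$, \[ \limsup_{m\to\infty}\frac{\log p^{(s_i)}_m}{|\bar{\Delta}^{(s_i)}_m|}=\limsup_{m\to\infty}\frac{\log p^{(s_j)}_m}{|\bar{\Delta}^{(s_j)}_m|}, \] i.e. all the stem entropies $h^{(s_i)}(X)$, $1\le i\le k$, coincide (the stem entropy of $X$ exists).
   Context: Let $K$ be a $k\times k$ matrix with entries in $\{0,1\}$ indexed by $S_k=\{s_1,\dots,s_k\}$, and let $G=\langle S_k\mid K\rangle$ be the semigroup generated by $S_k$ subject to the relations $s_is_j=1_G$ if and only if $K(s_i,s_j)=0$ ($1_G$ the identity). Every $g\in G$ has a unique minimal representation $g=g_1g_2\cdots g_n$ with $g_l\in S_k$ and $K(g_l,g_{l+1})=1$; its length is $|g|=n$ (with $|1_G|=0$). For $g\in G$ and $n\ge0$ the $n$-semiball at $g$ is $\bar{\Delta}^{(g)}_n=\{gh: h\in G,\ |h|\le n,\ |gh|=|g|+|h|\}$. For a finite alphabet $\mathcal{A}$, a pattern is a map $u:H\to\mathcal{A}$ with $H\subset G$ finite; $u$ is accepted by $t\in\mathcal{A}^G$ if there is $g\in G$ with $t_{gh}=u_h$ for all $h\in H$. A tree shift is a subset $X\subseteq\mathcal{A}^G$ consisting of all $t$ that accept no pattern from some fixed set $\mathcal{F}$ of patterns. $p^{(g)}_n$ denotes the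 number of patterns $u\in\mathcal{A}^{\bar{\Delta}^{(g)}_n}$ accepted by some $t\in X$. The $i$th stem entropy is $h^{(s_i)}(X)=\limsup_{n\to\infty}\log p^{(s_i)}_n/|\bar{\Delta}^{(s_i)}_n|$. A nonnegative square matrix is primitive if some power of it has all entries positive. *)

theory Defs
  imports Complex_Main "Jordan_Normal_Form.Matrix" "HOL-Library.Liminf_Limsup" "HOL-Library.Extended_Real"
    "HOL-Library.FuncSet"
begin

text \<open>Generators s_1..s_k are encoded by indices 0..k-1.  Elements of the semigroup
  G = <S_k | K> are encoded by their unique minimal representations, i.e. words
  g_1...g_n over {0..<k} with K(g_l,g_{l+1}) = 1; the empty word is 1_G.\<close>

definition Gset :: "nat \<Rightarrow> nat mat \<Rightarrow> nat list set" where
  "Gset k K = {w. set w \<subseteq> {..<k} \<and>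
      (\<forall>l. Suc l < length w \<longrightarrow> K $$ (w ! l, w ! Suc l) = 1)}"

text \<open>Product of two minimal words: concatenate and cancel s_a s_b = 1 at the junction
  whenever K(a,b) = 0.\<close>
fun gmul :: "nat mat \<Rightarrow> nat list \<Rightarrow> nat list \<Rightarrow> nat list" where
  "gmul K g [] = g"
| "gmul K g (b # h) =
     (if g \<noteq> [] \<and> K $$ (last g, b) = 0 then gmul K (butlast g) h else g @ b # h)"

definition semiball :: "nat \<Rightarrow> nat mat \<Rightarrow> nat list \<Rightarrow> nat \<Rightarrow> nat list set" where
  "semiball k K g n = {gmul K g h | h. h \<in> Gset k K \<and> length h \<le> n \<and>
      length (gmul K g h) = length g + length h}"

text \<open>Configurations t in A^G (values outside G are irrelevant and fixed to undefined).\<close>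
definition configs :: "nat \<Rightarrow> nat mat \<Rightarrow> (nat list \<Rightarrow> 'a) set" where
  "configs k K = {t. \<forall>w. w \<notin> Gset k K \<longrightarrow> t w = undefined}"

text \<open>A pattern is a pair (H,u) with H a finite subset of G and u : H -> A
  (only the values of u on H matter).  accepts k K t (H,u): t accepts the pattern.\<close>
definition accepts :: "nat \<Rightarrow> nat mat \<Rightarrow> (nat list \<Rightarrow> 'a) \<Rightarrow> nat list set \<times> (nat list \<Rightarrow> 'a) \<Rightarrow> bool" where
  "accepts k K t P = (\<exists>g \<in> Gset k K. \<forall>h \<in> fst P. t (gmul K g h) = snd P h)"

definition is_pattern :: "nat \<Rightarrow> nat mat \<Rightarrow> nat list set \<times> (nat list \<Rightarrow> 'a) \<Rightarrow> bool" where
  "is_pattern k K P = (finite (fst P) \<and> fst P \<subseteq> Gset k K)"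

definition tree_shift :: "nat \<Rightarrow> nat mat \<Rightarrow> (nat list set \<times> (nat list \<Rightarrow> 'a)) set
    \<Rightarrow> (nat list \<Rightarrow> 'a) set" where
  "tree_shift k K F = {t \<in> configs k K. \<forall>P \<in> F. \<not> accepts k K t P}"

definition is_tree_shift :: "nat \<Rightarrow> nat mat \<Rightarrow> (nat list \<Rightarrow> 'a) set \<Rightarrow> bool" where
  "is_tree_shift k K X = (\<exists>F. (\<forall>P \<in> F. is_pattern k K P) \<and> X = tree_shift k K F)"

text \<open>p^{(g)}_n: number of patterns u : semiball g n -> A accepted by some t in X
  (patterns with domain D are represented as restrict u D).\<close>
definition pcount :: "nat \<Rightarrow> nat mat \<Rightarrow> (nat list \<Rightarrow> 'a) set \<Rightarrow> nat list \<Rightarrow> nat \<Rightarrow> nat" where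
  "pcount k K X g n = card {u \<in> extensional (semiball k K g n).
      \<exists>t \<in> X. accepts k K t (semiball k K g n, u)}"

definition stem_entropy :: "nat \<Rightarrow> nat mat \<Rightarrow> (nat list \<Rightarrow> 'a) set \<Rightarrow> nat \<Rightarrow> ereal" where
  "stem_entropy k K X i = limsup (\<lambda>n. ereal (ln (real (pcount k K X [i] n))
        / real (card (semiball k K [i] n))))"

definition primitive_mat :: "nat \<Rightarrow> nat mat \<Rightarrow> bool" where
  "primitive_mat k K = (\<exists>m \<ge> 1. \<forall>i < k. \<forall>j < k. (K ^\<^sub>m m) $$ (i, j) > 0)"

end

theory Submission
  imports Defs
begin

text \<open>Write \<open>r\<^sub>i(n)\<close> for the quotient whose limsup is the \<open>i\<close>-th stem entropy. The semiball
  of radius \<open>n + 1\<close> at \<open>s\<^sub>i\<close> consists of \<open>s\<^sub>i\<close> and disjoint copies of the semiballs of radius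
  \<open>n\<close> at the successors \<open>s\<^sub>j\<close> of \<open>s\<^sub>i\<close> (those with \<open>K(s\<^sub>i, s\<^sub>j) = 1\<close>), and an accepted pattern
  on it is determined by its symbol at \<open>s\<^sub>i\<close> and its accepted restrictions to these copies. Hence
  \<open>r\<^sub>i(n + 1)\<close> is bounded by a sub-convex combination of the \<open>r\<^sub>j(n)\<close> plus an error tending to
  zero. Primitivity makes all semiball sizes comparable, so every successor carries a weight
  bounded away from zero. Therefore, if the stem entropy at \<open>s\<^sub>i\<close> is the largest one, every
  successor of \<open>s\<^sub>i\<close> attains it too, and since some power of \<open>K\<close> is positive, so does every
  generator.\<close>

lemma mat_mult_entry_pos:
  fixes A B :: "nat mat"
  assumes "A \<in> carrier_mat nr n" "B \<in> carrier_mat n nc" "i < nr" "j < nc"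
    and "(A * B) $$ (i, j) > 0"
  obtains q where "q < n" "A $$ (i, q) > 0" "B $$ (q, j) > 0"
proof -
  have "(A * B) $$ (i, j) = (\<Sum>q<n. A $$ (i, q) * B $$ (q, j))"
    using assms(1-4) by (simp add: scalar_prod_def lessThan_atLeast0)
  moreover have "(A * B) $$ (i, j) \<noteq> 0"
    using assms(5) by simp
  ultimately have "\<exists>q\<in>{..<n}. A $$ (i, q) > 0 \<and> B $$ (q, j) > 0"
    by simp
  then show ?thesis using that by blast
qed

lemma pow_mat_entry_pos_induct:
  fixes K :: "nat mat"
  assumes K: "K \<in> carrier_mat k k" and "(K ^\<^sub>m t) $$ (i, j) > 0" "i < k" "j < k"
    and base: "Q i 0"
    and step: "\<And>p l s. p < k \<Longrightarrow> l < k \<Longrightarrow> K $$ (p, l) > 0 \<Longrightarrow> Q p s \<Longrightarrow> Q l (Suc s)"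
  shows "Q j t"
  using assms(2,4)
proof (induction t arbitrary: j)
  case 0
  then show ?case using K \<open>i < k\<close> base by (simp split: if_splits)
next
  case (Suc t)
  then have "(K ^\<^sub>m t * K) $$ (i, j) > 0" by simp
  then obtain p where p: "p < k" "(K ^\<^sub>m t) $$ (i, p) > 0" "K $$ (p, j) > 0"
    using mat_mult_entry_pos[OF pow_carrier_mat[OF K] K \<open>i < k\<close> \<open>j < k\<close>] by blast
  show ?case
    by (rule step[OF p(1) \<open>j < k\<close> p(3) Suc.IH[OF p(2) p(1)]])
qed

text \<open>If \<open>h j0\<close> were smaller than \<open>h l\<close>, the weight \<open>\<ge> \<delta>\<close> on \<open>r j0\<close> would keep \<open>r l\<close>
  eventually below \<open>h l - 2\<eta>\<close>.\<close>
lemma limsup_eq_if_averaged: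
  fixes r a :: "'i \<Rightarrow> nat \<Rightarrow> real" and e :: "nat \<Rightarrow> real" and h :: "'i \<Rightarrow> real"
  assumes N: "finite N" and j0: "j0 \<in> N" and "\<delta> > 0"
    and recursion: "\<forall>\<^sub>F n in sequentially. r l (Suc n) \<le> e n + (\<Sum>j\<in>N. a j n * r j n)"
    and "e \<longlonglongrightarrow> 0"
    and a_nonneg: "\<And>j n. j \<in> N \<Longrightarrow> 0 \<le> a j n" and a_sum: "\<And>n. (\<Sum>j\<in>N. a j n) \<le> 1"
    and a_j0: "\<forall>\<^sub>F n in sequentially. \<delta> \<le> a j0 n"
    and limsup_r: "\<And>j. j \<in> insert l N \<Longrightarrow> limsup (\<lambda>n. ereal (r j n)) = ereal (h j)"
    and h_le: "\<And>j. j \<in> N \<Longrightarrow> h j \<le> h l" and "0 \<le> h l"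
  shows "h j0 = h l"
proof (rule ccontr)
  assume "h j0 \<noteq> h l"
  with h_le[OF j0] have gap: "h j0 < h l" by simp
  define \<eta> where "\<eta> = \<delta> * (h l - h j0) / 4"
  have "\<eta> > 0" using \<open>\<delta> > 0\<close> gap by (simp add: \<eta>_def)
  have "\<forall>\<^sub>F n in sequentially. \<forall>j\<in>N. r j n < h l + \<eta>"
  proof (rule eventually_ball_finite[OF N], rule ballI)
    fix j assume "j \<in> N"
    then have "limsup (\<lambda>n. ereal (r j n)) < ereal (h l + \<eta>)"
      using limsup_r h_le \<open>\<eta> > 0\<close> by fastforce
    from Limsup_lessD[OF this] show "\<forall>\<^sub>F n in sequentially. r j n < h l + \<eta>" by simp
  qed
  moreover have "\<forall>\<^sub>F n in sequentially. r j0 n < h j0 + \<eta>"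
  proof -
    have "limsup (\<lambda>n. ereal (r j0 n)) < ereal (h j0 + \<eta>)" using limsup_r j0 \<open>\<eta> > 0\<close> by simp
    from Limsup_lessD[OF this] show ?thesis by simp
  qed
  moreover have "\<forall>\<^sub>F n in sequentially. e n < \<eta>"
    using order_tendstoD(2)[OF \<open>e \<longlonglongrightarrow> 0\<close> \<open>\<eta> > 0\<close>] .
  ultimately have "\<forall>\<^sub>F n in sequentially. r l (Suc n) \<le> h l - 2 * \<eta>"
    using recursion a_j0
  proof eventually_elim
    case (elim n)
    let ?c = "h l + \<eta>"
    have "(\<Sum>j\<in>N. a j n * r j n) = a j0 n * r j0 n + (\<Sum>j\<in>N - {j0}. a j n * r j n)"
      using sum.remove[OF N j0] .
    also have "\<dots> \<le> a j0 n * (h j0 + \<eta>) + (\<Sum>j\<in>N - {j0}. a j n * ?c)"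
      using elim a_nonneg j0 by (intro add_mono mult_left_mono sum_mono) (auto intro: less_imp_le)
    also have "\<dots> = (\<Sum>j\<in>N. a j n) * ?c - a j0 n * (h l - h j0)"
    proof -
      have "(\<Sum>j\<in>N. a j n) * ?c = a j0 n * ?c + (\<Sum>j\<in>N - {j0}. a j n * ?c)"
        unfolding sum_distrib_right using sum.remove[OF N j0] .
      moreover have "a j0 n * (h j0 + \<eta>) = a j0 n * ?c - a j0 n * (h l - h j0)"
        by (simp add: algebra_simps)
      ultimately show ?thesis by linarith
    qed
    also have "\<dots> \<le> ?c - \<delta> * (h l - h j0)"
    proof -
      have "(\<Sum>j\<in>N. a j n) * ?c \<le> ?c"
        using a_sum \<open>0 \<le> h l\<close> \<open>\<eta> > 0\<close> by (simp add: mult_left_le_one_le)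
      moreover have "\<delta> * (h l - h j0) \<le> a j0 n * (h l - h j0)"
        using elim gap by (intro mult_right_mono) auto
      ultimately show ?thesis by linarith
    qed
    finally have "(\<Sum>j\<in>N. a j n * r j n) \<le> ?c - \<delta> * (h l - h j0)" .
    moreover have "\<delta> * (h l - h j0) = 4 * \<eta>"
      by (simp add: \<eta>_def)
    ultimately show ?case using elim by linarith
  qed
  then have "\<forall>\<^sub>F n in sequentially. ereal (r l n) \<le> ereal (h l - 2 * \<eta>)"
    by (subst eventually_sequentially_Suc[symmetric]) simp
  then have "limsup (\<lambda>n. ereal (r l n)) \<le> ereal (h l - 2 * \<eta>)" by (rule Limsup_bounded)
  then show False using limsup_r[of l] \<open>\<eta> > 0\<close> by simp
qed

lemma ln_of_nat_nonneg: "0 \<le> ln (real (m::nat))"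
  by (cases "m = 0") auto

lemma extensional_funs_subset_PiE: "{u \<in> extensional D. P u} \<subseteq> PiE D (\<lambda>_. UNIV)"
  by (auto simp: PiE_def)

lemma finite_extensional_funs:
  "finite D \<Longrightarrow> finite {u :: 'b \<Rightarrow> 'a::finite. u \<in> extensional D \<and> P u}"
  using extensional_funs_subset_PiE by (rule finite_subset) (simp add: finite_PiE)

lemma card_extensional_funs_le:
  assumes "finite D"
  shows "card {u :: 'b \<Rightarrow> 'a::finite. u \<in> extensional D \<and> P u} \<le> card (UNIV :: 'a set) ^ card D"
proof -
  have "card {u :: 'b \<Rightarrow> 'a. u \<in> extensional D \<and> P u} \<le> card (PiE D (\<lambda>_. UNIV :: 'a set))"
    by (rule card_mono[OF _ extensional_funs_subset_PiE]) (simp add: finite_PiE assms)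
  then show ?thesis using assms by (simp add: card_PiE)
qed

lemma Gset_eq_successively:
  "Gset k K = {w. set w \<subseteq> {..<k} \<and> successively (\<lambda>a b. K $$ (a, b) = 1) w}"
  by (simp add: Gset_def successively_conv_nth)

lemma Gset_Nil [simp]: "[] \<in> Gset k K"
  by (simp add: Gset_def)

lemma Gset_Cons_iff:
  "x # w \<in> Gset k K \<longleftrightarrow> x < k \<and> w \<in> Gset k K \<and> (w \<noteq> [] \<longrightarrow> K $$ (x, hd w) = 1)"
  by (auto simp: Gset_eq_successively successively_Cons)

lemma gmul_Nil_left [simp]: "gmul K [] h = h"
  by (cases h) auto

lemma gmul_assoc_Cons:
  "K $$ (i, j) = 1 \<Longrightarrow> gmul K (gmul K g [i]) (j # v) = gmul K g (i # j # v)"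
  by (cases "g \<noteq> [] \<and> K $$ (last g, i) = 0") auto

locale presentation =
  fixes k :: nat and K :: "nat mat"
  assumes K_carrier: "K \<in> carrier_mat k k"
    and K_01: "\<forall>i < k. \<forall>j < k. K $$ (i, j) \<in> {0, 1}"
begin

lemma K_pos_iff: "i < k \<Longrightarrow> j < k \<Longrightarrow> 0 < K $$ (i, j) \<longleftrightarrow> K $$ (i, j) = 1"
proof -
  assume "i < k" "j < k"
  then have "K $$ (i, j) \<in> {0, 1}" using K_01 by blast
  then show ?thesis by auto
qed

lemma gmul_closed: "g \<in> Gset k K \<Longrightarrow> h \<in> Gset k K \<Longrightarrow> gmul K g h \<in> Gset k K"
proof (induction h arbitrary: g)
  case (Cons b h)
  have "butlast g \<in> Gset k K"
    using Cons.prems(1) by (auto simp: Gset_def nth_butlast dest: in_set_butlastD)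
  moreover have "g @ b # h \<in> Gset k K" if "g = [] \<or> K $$ (last g, b) \<noteq> 0"
  proof -
    have "K $$ (last g, b) = 1" if "g \<noteq> []"
    proof -
      have "last g < k" using Cons.prems(1) last_in_set[OF that] by (auto simp: Gset_def)
      moreover have "b < k" using Cons.prems(2) by (simp add: Gset_Cons_iff)
      ultimately show ?thesis using K_pos_iff \<open>g = [] \<or> K $$ (last g, b) \<noteq> 0\<close> that by simp
    qed
    then show ?thesis
      using Cons.prems by (auto simp: Gset_eq_successively successively_append_iff)
  qed
  moreover have "h \<in> Gset k K" using Cons.prems(2) by (simp add: Gset_Cons_iff)
  ultimately show ?case using Cons by auto
qed simp

definition succs :: "nat \<Rightarrow> nat set" where
  "succs i = {j. j < k \<and> K $$ (i, j) = 1}"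

lemma finite_succs [simp]: "finite (succs i)"
  by (simp add: succs_def)

lemma succs_less: "j \<in> succs i \<Longrightarrow> j < k"
  by (simp add: succs_def)

lemma succsI: "i < k \<Longrightarrow> j < k \<Longrightarrow> 0 < K $$ (i, j) \<Longrightarrow> j \<in> succs i"
  by (simp add: succs_def K_pos_iff)

abbreviation stem :: "nat \<Rightarrow> nat \<Rightarrow> nat list set" where
  "stem i n \<equiv> semiball k K [i] n"

lemma stem_eq: "i < k \<Longrightarrow> stem i n = {i # h | h. i # h \<in> Gset k K \<and> length h \<le> n}"
proof -
  assume "i < k"
  have no_cancel: "length (gmul K [i] h) = Suc (length h) \<longleftrightarrow> i # h \<in> Gset k K"
    "i # h \<in> Gset k K \<Longrightarrow> gmul K [i] h = i # h" if "h \<in> Gset k K" for h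
    using that \<open>i < k\<close> K_01 by (cases h; force simp: Gset_Cons_iff)+
  show ?thesis unfolding semiball_def
  proof (intro equalityI subsetI)
    fix w assume "w \<in> {gmul K [i] h |h. h \<in> Gset k K \<and> length h \<le> n
        \<and> length (gmul K [i] h) = length [i] + length h}"
    then obtain h where "w = gmul K [i] h" "h \<in> Gset k K" "length h \<le> n"
      "length (gmul K [i] h) = Suc (length h)" by auto
    then show "w \<in> {i # h |h. i # h \<in> Gset k K \<and> length h \<le> n}" using no_cancel by auto
  next
    fix w assume "w \<in> {i # h |h. i # h \<in> Gset k K \<and> length h \<le> n}"
    then obtain h where "w = i # h" "i # h \<in> Gset k K" "length h \<le> n" by blast
    moreover have "h \<in> Gset k K" using \<open>i # h \<in> Gset k K\<close> by (simp add: Gset_Cons_iff)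
    ultimately show "w \<in> {gmul K [i] h |h. h \<in> Gset k K \<and> length h \<le> n
        \<and> length (gmul K [i] h) = length [i] + length h}" using no_cancel by force
  qed
qed

lemma stem_finite: "i < k \<Longrightarrow> finite (stem i n)"
proof -
  assume "i < k"
  then have "stem i n \<subseteq> {w. set w \<subseteq> {..<k} \<and> length w \<le> Suc n}"
    by (auto simp: stem_eq Gset_def)
  then show ?thesis using finite_lists_length_le[of "{..<k}" "Suc n"] finite_subset by blast
qed

lemma stem_Suc:
  assumes "i < k"
  shows "stem i (Suc n) = insert [i] (\<Union>j\<in>succs i. Cons i ` stem j n)"
proof (intro equalityI subsetI)
  fix w assume "w \<in> stem i (Suc n)"
  then obtain h where w: "w = i # h" "i # h \<in> Gset k K" "length h \<le> Suc n"
    using stem_eq[OF assms] by blast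
  show "w \<in> insert [i] (\<Union>j\<in>succs i. Cons i ` stem j n)"
  proof (cases h)
    case (Cons j v)
    then have "j \<in> succs i" "h \<in> stem j n"
      using w by (auto simp: Gset_Cons_iff succs_def stem_eq)
    then show ?thesis using w by blast
  qed (use w in simp)
next
  fix w assume "w \<in> insert [i] (\<Union>j\<in>succs i. Cons i ` stem j n)"
  then show "w \<in> stem i (Suc n)"
    using assms by (auto simp: stem_eq succs_def Gset_Cons_iff)
qed

lemma card_stem_Suc:
  assumes "i < k"
  shows "card (stem i (Suc n)) = Suc (\<Sum>j\<in>succs i. card (stem j n))"
proof -
  have "card (\<Union>j\<in>succs i. Cons i ` stem j n) = (\<Sum>j\<in>succs i. card (Cons i ` stem j n))"
  proof (rule card_UN_disjoint)
    show "\<forall>j\<in>succs i. finite (Cons i ` stem j n)"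
      using succs_less stem_finite by blast
    show "\<forall>j\<in>succs i. \<forall>j'\<in>succs i. j \<noteq> j' \<longrightarrow> Cons i ` stem j n \<inter> Cons i ` stem j' n = {}"
      using succs_less by (auto simp: stem_eq)
  qed simp
  moreover have "[i] \<notin> (\<Union>j\<in>succs i. Cons i ` stem j n)"
    using succs_less by (auto simp: stem_eq)
  ultimately show ?thesis
    using succs_less by (simp add: stem_Suc[OF assms] stem_finite card_image)
qed

lemma card_stem_pos: "i < k \<Longrightarrow> 0 < card (stem i n)"
proof -
  assume "i < k"
  then have "[i] \<in> stem i n" by (simp add: stem_eq Gset_Cons_iff)
  then show ?thesis using stem_finite[OF \<open>i < k\<close>] card_gt_0_iff by blast
qed

lemma card_stem_succ_less: "i < k \<Longrightarrow> j \<in> succs i \<Longrightarrow> card (stem j n) < card (stem i (Suc n))"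
  using card_stem_Suc[of i n] member_le_sum[of j "succs i" "\<lambda>j. card (stem j n)"]
  by (simp add: succs_def)

lemma card_stem_walk:
  assumes "(K ^\<^sub>m t) $$ (i, j) > 0" "i < k" "j < k"
  shows "card (stem j n) \<le> card (stem i (n + t))"
proof -
  have "\<forall>n. card (stem j n) \<le> card (stem i (n + t))"
    using K_carrier assms
  proof (rule pow_mat_entry_pos_induct[where Q = "\<lambda>l s. \<forall>n. card (stem l n) \<le> card (stem i (n + s))"])
    fix p l s
    assume "p < k" "l < k" "0 < K $$ (p, l)" and IH: "\<forall>n. card (stem p n) \<le> card (stem i (n + s))"
    then have less: "card (stem l n) < card (stem p (Suc n))" for n
      by (intro card_stem_succ_less succsI)
    show "\<forall>n. card (stem l n) \<le> card (stem i (n + Suc s))"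
    proof
      fix n
      have "card (stem l n) \<le> card (stem p (Suc n))" using less[of n] by simp
      also have "\<dots> \<le> card (stem i (Suc n + s))" using IH by blast
      finally show "card (stem l n) \<le> card (stem i (n + Suc s))" by simp
    qed
  qed simp
  then show ?thesis by blast
qed

lemma succs_nonempty:
  assumes "primitive_mat k K" "i < k"
  shows "succs i \<noteq> {}"
proof -
  obtain m where "m \<ge> 1" and walk: "(K ^\<^sub>m m) $$ (i, i) > 0"
    using assms unfolding primitive_mat_def by blast
  \<comment> \<open>the first step of a walk from \<open>i\<close> leads to a successor of \<open>i\<close>\<close>
  have "(m = 0 \<and> i = i) \<or> succs i \<noteq> {}"
    using K_carrier walk assms(2) assms(2)
  proof (rule pow_mat_entry_pos_induct[where Q = "\<lambda>l s. (s = 0 \<and> l = i) \<or> succs i \<noteq> {}"])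
    fix p l s :: nat
    assume "p < k" "l < k" "0 < K $$ (p, l)" "(s = 0 \<and> p = i) \<or> succs i \<noteq> {}"
    then show "(Suc s = 0 \<and> l = i) \<or> succs i \<noteq> {}"
      using succsI by blast
  qed simp
  then show ?thesis using \<open>m \<ge> 1\<close> by simp
qed

lemma card_stem_ge:
  assumes "\<And>i. i < k \<Longrightarrow> succs i \<noteq> {}"
  shows "i < k \<Longrightarrow> Suc n \<le> card (stem i n)"
proof (induction n arbitrary: i)
  case 0
  then show ?case using card_stem_pos by (simp add: Suc_le_eq)
next
  case (Suc n)
  then obtain j where "j \<in> succs i" using assms by blast
  then show ?case
    using Suc.IH[of j] card_stem_succ_less[OF Suc.prems, of j n] by (simp add: succs_def)
qed

text \<open>The total size of the semiballs at all generators grows at most by the factor \<open>2k\<close> per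
  step, and when \<open>K\<^sup>m\<close> is positive the semiball of radius \<open>n + m\<close> at any generator dominates every
  semiball of radius \<open>n\<close>.\<close>
lemma card_stem_comparable:
  assumes K_pow: "\<forall>i<k. \<forall>j<k. (K ^\<^sub>m m) $$ (i, j) > 0" and "q < k" "j < k"
  shows "card (stem q (Suc (n + m))) \<le> (2 * k) ^ Suc m * k * card (stem j (n + m))"
proof -
  define total where "total n = (\<Sum>l<k. card (stem l n))" for n
  have le_total: "card (stem l n) \<le> total n" if "l < k" for l n
    unfolding total_def using that by (intro member_le_sum) auto
  have total_Suc: "total (Suc n) \<le> 2 * k * total n" for n
  proof -
    have "card (stem l (Suc n)) \<le> 2 * total n" if "l < k" for l
    proof -
      have "(\<Sum>j\<in>succs l. card (stem j n)) \<le> total n"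
        unfolding total_def by (rule sum_mono2) (auto simp: succs_def)
      moreover have "1 \<le> total n" using le_total[OF that, of n] card_stem_pos[OF that, of n] by simp
      ultimately show ?thesis using card_stem_Suc[OF that] by simp
    qed
    then have "total (Suc n) \<le> (\<Sum>l<k. 2 * total n)"
      unfolding total_def[of "Suc n"] by (intro sum_mono) auto
    then show ?thesis by simp
  qed
  have total_add: "total (n + t) \<le> (2 * k) ^ t * total n" for t
  proof (induction t)
    case (Suc t)
    have "total (n + Suc t) \<le> 2 * k * total (n + t)" using total_Suc[of "n + t"] by simp
    also have "\<dots> \<le> 2 * k * ((2 * k) ^ t * total n)" using Suc.IH by simp
    finally show ?case by (simp add: mult.assoc)
  qed simp
  have "total n \<le> (\<Sum>l<k. card (stem j (n + m)))"
    unfolding total_def by (intro sum_mono card_stem_walk) (use K_pow \<open>j < k\<close> in auto)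
  then have total_le: "total n \<le> k * card (stem j (n + m))" by simp
  have "card (stem q (Suc (n + m))) \<le> (2 * k) ^ Suc m * total n"
    using le_total[OF \<open>q < k\<close>, of "n + Suc m"] total_add[of "Suc m"] by simp
  also have "\<dots> \<le> (2 * k) ^ Suc m * (k * card (stem j (n + m)))"
    using total_le by (rule mult_left_mono) simp
  finally show ?thesis by (simp add: mult.assoc)
qed

lemma pcount_le:
  fixes X :: "(nat list \<Rightarrow> 'a::finite) set"
  shows "i < k \<Longrightarrow> pcount k K X [i] n \<le> card (UNIV :: 'a set) ^ card (stem i n)"
  unfolding pcount_def by (intro card_extensional_funs_le stem_finite)

definition accepted_patterns :: "(nat list \<Rightarrow> 'a) set \<Rightarrow> nat list set \<Rightarrow> (nat list \<Rightarrow> 'a) set" where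
  "accepted_patterns X D = {u \<in> extensional D. \<exists>t\<in>X. accepts k K t (D, u)}"

lemma pcount_eq_card_accepted: "pcount k K X [i] n = card (accepted_patterns X (stem i n))"
  unfolding pcount_def accepted_patterns_def ..

lemma finite_accepted_patterns:
  fixes X :: "(nat list \<Rightarrow> 'a::finite) set"
  shows "finite D \<Longrightarrow> finite (accepted_patterns X D)"
  unfolding accepted_patterns_def by (rule finite_extensional_funs)

text \<open>No property of \<open>X\<close> is needed: a configuration accepting a pattern on the semiball at
  \<open>s\<^sub>i\<close> at position \<open>g\<close> accepts its restriction to the copy \<open>s\<^sub>i \<cdot> semiball(s\<^sub>j, n)\<close> at
  position \<open>g s\<^sub>i\<close>.\<close>
lemma restriction_accepted:
  assumes i: "i < k" and j: "j \<in> succs i" and u: "u \<in> accepted_patterns X (stem i (Suc n))"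
  shows "(\<lambda>v\<in>stem j n. u (i # v)) \<in> accepted_patterns X (stem j n)"
proof -
  obtain t g where t: "t \<in> X" "g \<in> Gset k K"
    and tg: "\<forall>w\<in>stem i (Suc n). t (gmul K g w) = u w"
    using u unfolding accepted_patterns_def accepts_def by auto
  have j': "j < k" "K $$ (i, j) = 1"
    using j by (simp_all add: succs_def)
  have "[i] \<in> Gset k K" using i by (simp add: Gset_Cons_iff)
  then have "gmul K g [i] \<in> Gset k K" using gmul_closed t(2) by blast
  moreover have "t (gmul K (gmul K g [i]) v) = u (i # v)" if v_stem: "v \<in> stem j n" for v
  proof -
    obtain v' where v: "v = j # v'"
      using v_stem unfolding stem_eq[OF j'(1)] by blast
    have "i # v \<in> stem i (Suc n)"
      using v_stem j unfolding stem_Suc[OF i] by blast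
    then have "t (gmul K g (i # v)) = u (i # v)"
      using tg by blast
    moreover have "gmul K (gmul K g [i]) v = gmul K g (i # v)"
      unfolding v by (rule gmul_assoc_Cons[OF j'(2)])
    ultimately show ?thesis by (simp only:)
  qed
  ultimately show ?thesis
    unfolding accepted_patterns_def accepts_def using t(1) by auto
qed

lemma stem_Suc_extensional_eqI:
  assumes "i < k" "u \<in> extensional (stem i (Suc n))" "u' \<in> extensional (stem i (Suc n))"
    and "u [i] = u' [i]" and "\<And>j v. j \<in> succs i \<Longrightarrow> v \<in> stem j n \<Longrightarrow> u (i # v) = u' (i # v)"
  shows "u = u'"
  using assms(2,3)
proof (rule extensionalityI)
  fix w assume "w \<in> stem i (Suc n)"
  then show "u w = u' w"
    using assms(4,5) unfolding stem_Suc[OF assms(1)] by blast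
qed

lemma pcount_Suc_le:
  fixes X :: "(nat list \<Rightarrow> 'a::finite) set"
  assumes i: "i < k"
  shows "pcount k K X [i] (Suc n) \<le> card (UNIV :: 'a set) * (\<Prod>j\<in>succs i. pcount k K X [j] n)"
proof -
  define decompose where
    "decompose u = (u [i], \<lambda>j\<in>succs i. \<lambda>v\<in>stem j n. u (i # v))" for u :: "nat list \<Rightarrow> 'a"
  let ?A = "accepted_patterns X (stem i (Suc n))"
  let ?B = "(UNIV :: 'a set) \<times> PiE (succs i) (\<lambda>j. accepted_patterns X (stem j n))"
  have "inj_on decompose ?A"
  proof (rule inj_onI)
    fix u u' assume "u \<in> ?A" "u' \<in> ?A" and eq: "decompose u = decompose u'"
    then show "u = u'"
      unfolding accepted_patterns_def
    proof (intro stem_Suc_extensional_eqI[OF i])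
      show "u [i] = u' [i]" using arg_cong[OF eq, of fst] by (simp add: decompose_def)
      show "u (i # v) = u' (i # v)" if "j \<in> succs i" "v \<in> stem j n" for j v
        using arg_cong[OF eq, of "\<lambda>p. snd p j v"] that by (simp add: decompose_def)
    qed auto
  qed
  then have "card ?A = card (decompose ` ?A)"
    by (simp add: card_image)
  also have "\<dots> \<le> card ?B"
  proof (rule card_mono)
    show "finite ?B"
      using stem_finite succs_less by (simp add: finite_PiE finite_accepted_patterns)
    show "decompose ` ?A \<subseteq> ?B"
      using restriction_accepted[OF i] by (auto simp: decompose_def)
  qed
  also have "\<dots> = card (UNIV :: 'a set) * (\<Prod>j\<in>succs i. pcount k K X [j] n)"
    by (simp add: card_cartesian_product card_PiE pcount_eq_card_accepted)
  finally show ?thesis by (simp only: pcount_eq_card_accepted)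
qed

definition stem_ratio :: "(nat list \<Rightarrow> 'a) set \<Rightarrow> nat \<Rightarrow> nat \<Rightarrow> real" where
  "stem_ratio X i n = ln (pcount k K X [i] n) / card (stem i n)"

lemma stem_entropy_eq_limsup_ratio: "stem_entropy k K X i = limsup (\<lambda>n. ereal (stem_ratio X i n))"
  unfolding stem_entropy_def stem_ratio_def ..

lemma ln_pcount_Suc_le:
  fixes X :: "(nat list \<Rightarrow> 'a::finite) set"
  assumes i: "i < k"
  shows "ln (pcount k K X [i] (Suc n)) \<le> ln (card (UNIV :: 'a set)) + (\<Sum>j\<in>succs i. ln (pcount k K X [j] n))"
proof (cases "pcount k K X [i] (Suc n) = 0")
  case True
  then show ?thesis by (simp add: sum_nonneg ln_of_nat_nonneg add_nonneg_nonneg)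
next
  case False
  let ?P = "\<lambda>j. pcount k K X [j] n"
  have le: "pcount k K X [i] (Suc n) \<le> card (UNIV :: 'a set) * (\<Prod>j\<in>succs i. ?P j)"
    by (rule pcount_Suc_le[OF i])
  have "(\<Prod>j\<in>succs i. ?P j) \<noteq> 0"
  proof
    assume "(\<Prod>j\<in>succs i. ?P j) = 0"
    with le False show False by simp
  qed
  then have "0 < (\<Prod>j\<in>succs i. real (?P j))" and nz: "\<forall>j\<in>succs i. ?P j \<noteq> 0"
    by (simp_all add: prod_pos)
  have "real (pcount k K X [i] (Suc n)) \<le> real (card (UNIV :: 'a set) * (\<Prod>j\<in>succs i. ?P j))"
    using le by (simp only: of_nat_le_iff)
  then have "ln (pcount k K X [i] (Suc n)) \<le> ln (real (card (UNIV :: 'a set)) * (\<Prod>j\<in>succs i. real (?P j)))"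
    using False by (intro ln_mono) simp_all
  also have "\<dots> = ln (card (UNIV :: 'a set)) + ln (\<Prod>j\<in>succs i. real (?P j))"
    using nz by (simp add: ln_mult)
  also have "ln (\<Prod>j\<in>succs i. real (?P j)) = (\<Sum>j\<in>succs i. ln (?P j))"
    using nz by (simp add: ln_prod)
  finally show ?thesis .
qed

lemma stem_ratio_Suc_le:
  fixes X :: "(nat list \<Rightarrow> 'a::finite) set"
  assumes i: "i < k"
  shows "stem_ratio X i (Suc n) \<le> ln (card (UNIV :: 'a set)) / card (stem i (Suc n))
    + (\<Sum>j\<in>succs i. card (stem j n) / card (stem i (Suc n)) * stem_ratio X j n)"
proof -
  let ?S = "real (card (stem i (Suc n)))"
  have "0 < ?S" using card_stem_pos[OF i] by simp
  have "stem_ratio X i (Suc n) = ln (pcount k K X [i] (Suc n)) / ?S"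
    by (simp add: stem_ratio_def)
  also have "\<dots> \<le> (ln (card (UNIV :: 'a set)) + (\<Sum>j\<in>succs i. ln (pcount k K X [j] n))) / ?S"
    using ln_pcount_Suc_le[OF i] by (rule divide_right_mono) (use \<open>0 < ?S\<close> in simp)
  also have "\<dots> = ln (card (UNIV :: 'a set)) / ?S + (\<Sum>j\<in>succs i. ln (pcount k K X [j] n) / ?S)"
    by (simp add: add_divide_distrib sum_divide_distrib)
  also have "(\<Sum>j\<in>succs i. ln (pcount k K X [j] n) / ?S)
      = (\<Sum>j\<in>succs i. card (stem j n) / ?S * stem_ratio X j n)"
  proof (rule sum.cong[OF refl])
    fix j assume "j \<in> succs i"
    then have "real (card (stem j n)) \<noteq> 0" using card_stem_pos succs_less by simp
    then show "ln (pcount k K X [j] n) / ?S = card (stem j n) / ?S * stem_ratio X j n"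
      by (simp add: stem_ratio_def)
  qed
  finally show ?thesis .
qed

lemma stem_entropy_bounds:
  fixes X :: "(nat list \<Rightarrow> 'a::finite) set"
  assumes i: "i < k"
  shows "0 \<le> stem_entropy k K X i" "stem_entropy k K X i \<le> ln (card (UNIV :: 'a set))"
proof -
  have "\<forall>n. 0 \<le> ereal (stem_ratio X i n)"
    by (simp add: stem_ratio_def ln_of_nat_nonneg)
  then have "0 \<le> limsup (\<lambda>n. ereal (stem_ratio X i n))"
    by (intro le_Limsup always_eventually) simp_all
  then show "0 \<le> stem_entropy k K X i"
    by (simp add: stem_entropy_eq_limsup_ratio)
  have "stem_ratio X i n \<le> ln (card (UNIV :: 'a set))" for n
  proof (cases "pcount k K X [i] n = 0")
    case False
    have "real (pcount k K X [i] n) \<le> real (card (UNIV :: 'a set) ^ card (stem i n))"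
      using pcount_le[OF i, of X n] by (simp only: of_nat_le_iff)
    then have "ln (pcount k K X [i] n) \<le> ln (real (card (UNIV :: 'a set)) ^ card (stem i n))"
      using False by (intro ln_mono) simp_all
    also have "\<dots> = ln (card (UNIV :: 'a set)) * card (stem i n)"
      by (simp add: ln_realpow mult.commute)
    finally show ?thesis
      using card_stem_pos[OF i, of n] by (simp add: stem_ratio_def pos_divide_le_eq)
  qed (simp add: stem_ratio_def ln_of_nat_nonneg)
  then have "\<forall>n. ereal (stem_ratio X i n) \<le> ereal (ln (card (UNIV :: 'a set)))"
    by simp
  then have "limsup (\<lambda>n. ereal (stem_ratio X i n)) \<le> ln (card (UNIV :: 'a set))"
    by (intro Limsup_bounded always_eventually)
  then show "stem_entropy k K X i \<le> ln (card (UNIV :: 'a set))"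
    by (simp add: stem_entropy_eq_limsup_ratio)
qed

lemma card_stem_Suc_tendsto:
  assumes "primitive_mat k K" "q < k"
  shows "filterlim (\<lambda>n. real (card (stem q (Suc n)))) at_top sequentially"
proof -
  have "\<forall>n. real n \<le> real (card (stem q (Suc n)))"
  proof
    fix n
    show "real n \<le> real (card (stem q (Suc n)))"
      using card_stem_ge[OF succs_nonempty[OF assms(1)] assms(2), of "Suc n"] by simp
  qed
  then show ?thesis
    by (rule filterlim_at_top_mono[OF filterlim_real_sequentially always_eventually])
qed

lemma stem_weight_bounded_below:
  assumes "primitive_mat k K" "q < k" "j \<in> succs q"
  obtains \<delta> :: real where "\<delta> > 0"
    "\<forall>\<^sub>F n in sequentially. \<delta> \<le> card (stem j n) / card (stem q (Suc n))"
proof -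
  obtain m where K_pow: "\<forall>i<k. \<forall>j<k. (K ^\<^sub>m m) $$ (i, j) > 0"
    using assms(1) unfolding primitive_mat_def by blast
  define C where "C = (2 * k) ^ Suc m * k"
  have "C > 0" using assms(2) by (simp add: C_def)
  have "1 / real C \<le> card (stem j n) / card (stem q (Suc n))" if "n \<ge> m" for n
  proof -
    have "card (stem q (Suc n)) \<le> C * card (stem j n)"
      using card_stem_comparable[OF K_pow assms(2) succs_less[OF assms(3)], of "n - m"] that
      by (simp add: C_def)
    then have "real (card (stem q (Suc n))) \<le> real C * card (stem j n)"
      by (metis of_nat_le_iff of_nat_mult)
    then show ?thesis
      using \<open>C > 0\<close> card_stem_pos[OF assms(2), of "Suc n"] by (simp add: field_simps)
  qed
  then show ?thesis
    using that[of "1 / real C"] \<open>C > 0\<close> unfolding eventually_sequentially by auto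
qed

lemma stem_entropy_succ_eq_max:
  fixes X :: "(nat list \<Rightarrow> 'a::finite) set"
  assumes "primitive_mat k K" and q: "q < k" and j: "j \<in> succs q"
    and q_max: "\<forall>l<k. stem_entropy k K X l \<le> stem_entropy k K X q"
  shows "stem_entropy k K X j = stem_entropy k K X q"
proof -
  define h where "h l = real_of_ereal (stem_entropy k K X l)" for l
  have entropy_h: "stem_entropy k K X l = ereal (h l)" if "l < k" for l
    using stem_entropy_bounds[OF that, of X] unfolding h_def by (cases "stem_entropy k K X l") auto
  obtain \<delta> where "\<delta> > 0" and weight_j: "\<forall>\<^sub>F n in sequentially. \<delta> \<le> card (stem j n) / card (stem q (Suc n))"
    using stem_weight_bounded_below[OF assms(1-3)] .
  let ?a = "\<lambda>l n. real (card (stem l n)) / card (stem q (Suc n))"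
  have "h j = h q"
  proof (rule limsup_eq_if_averaged[where r = "stem_ratio X" and a = ?a, OF finite_succs j \<open>\<delta> > 0\<close>])
    show "\<forall>\<^sub>F n in sequentially. stem_ratio X q (Suc n)
        \<le> ln (card (UNIV :: 'a set)) / card (stem q (Suc n)) + (\<Sum>l\<in>succs q. ?a l n * stem_ratio X l n)"
      by (intro always_eventually allI) (rule stem_ratio_Suc_le[OF q])
    show "(\<lambda>n. ln (card (UNIV :: 'a set)) / card (stem q (Suc n))) \<longlonglongrightarrow> 0"
      using card_stem_Suc_tendsto[OF assms(1) q]
      by (intro tendsto_divide_0[OF tendsto_const] filterlim_at_top_imp_at_infinity)
    show "(\<Sum>l\<in>succs q. ?a l n) \<le> 1" for n
      using card_stem_Suc[OF q, of n] card_stem_pos[OF q, of "Suc n"]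
      by (simp add: sum_divide_distrib[symmetric] flip: of_nat_sum)
    show "limsup (\<lambda>n. ereal (stem_ratio X l n)) = ereal (h l)" if "l \<in> insert q (succs q)" for l
    proof -
      have "l < k" using that q succs_less by blast
      then show ?thesis using entropy_h[of l] unfolding stem_entropy_eq_limsup_ratio by simp
    qed
    show "h l \<le> h q" if "l \<in> succs q" for l
      using q_max[rule_format, OF succs_less[OF that]] by (simp add: entropy_h succs_less[OF that] q)
    show "0 \<le> h q"
      using stem_entropy_bounds[OF q, of X] entropy_h[OF q] by simp
  qed (use weight_j in simp_all)
  then show ?thesis using entropy_h q succs_less[OF j] by simp
qed

end

theorem theorem3p1:
  fixes k :: nat and K :: "nat mat" and X :: "(nat list \<Rightarrow> 'a::finite) set"
  assumes "K \<in> carrier_mat k k"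
    and "\<forall>i < k. \<forall>j < k. K $$ (i, j) \<in> {0, 1}"
    and "is_tree_shift k K X"
    and "primitive_mat k K"
    and "i < k" and "j < k"
  shows "stem_entropy k K X i = stem_entropy k K X j"
proof -
  interpret presentation k K using assms(1,2) by unfold_locales
  let ?E = "stem_entropy k K X"
  have "Max (?E ` {..<k}) \<in> ?E ` {..<k}"
    using assms(5) by (intro Max_in) auto
  then obtain q where q: "q < k" "?E q = Max (?E ` {..<k})"
    by auto
  then have q_max: "\<forall>l<k. ?E l \<le> ?E q" by simp
  have reach: "?E l = ?E q" if "(K ^\<^sub>m t) $$ (q, l) > 0" "l < k" for t l
    using K_carrier that(1) q(1) that(2)
  proof (rule pow_mat_entry_pos_induct[where Q = "\<lambda>l _. ?E l = ?E q"])
    fix p l s assume "p < k" "l < k" "0 < K $$ (p, l)" "?E p = ?E q"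
    then show "?E l = ?E q"
      using stem_entropy_succ_eq_max[OF assms(4) \<open>p < k\<close> succsI, of l X] q_max by simp
  qed simp
  obtain m where "\<forall>i<k. \<forall>j<k. (K ^\<^sub>m m) $$ (i, j) > 0"
    using assms(4) unfolding primitive_mat_def by blast
  then have "?E i = ?E q" and "?E j = ?E q"
    using reach q(1) assms(5,6) by blast+
  then show ?thesis by simp
qed

end
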